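(* Let $G$ be a connected graph with $\mu_t(G)=|\mathcal{S}(G)|$, and let $\{C_1,\dots,C_k\}$ be the partition of $\mathcal{S}(G)$ into true twin equivalence classes. Then for every integer $n\ge 2$, $$\mu_t(G\,\Box\,K_n)=\sum_{i=1}^{k}\max\{|C_i|,n\}.$$
   Context: All graphs are finite, simple and undirected; $K_n$ is the complete graph on $n$ vertices and $N_G[v]$ the closed neighborhood of $v$. The Cartesian product $G\,\Box\,H$ has vertex set $V(G)\times V(H)$, with $(x,y)$ adjacent to $(x',y')$ iff either $x=x'$ and $yy'\in E(H)$, or $xx'\in E(G)$ and $y=y'$. Let $F$ be a connected graph and $X\subseteq V(F)$. Two vertices $u,v\in V(F)$ are $X$-visible if there exists a shortest $u,v$-path in $F$ none of whose internal vertices belongs to $X$. $X$ is a total mutual-visibility set of $F$ if every two vertices of $F$ are $X$-visible (the empty set is allowed). $\mu_t(F)$ is the maximum cardinality of a total mutual-visibility set of $F$. A vertex is simplicial if its neighbors induce a complete graph; $\mathcal{S}(G)$ is the set of simplicial vertices of $G$. Two simplicial vertices $g,g'$ are in the same true twin class iff $N_G[g]=N_G[g']$. *)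

theory Defs
  imports Main
begin

definition simple_graph :: "'a set \<Rightarrow> ('a \<Rightarrow> 'a \<Rightarrow> bool) \<Rightarrow> bool" where
  "simple_graph V E \<longleftrightarrow> finite V \<and> (\<forall>x y. E x y \<longrightarrow> x \<in> V \<and> y \<in> V)
     \<and> (\<forall>x y. E x y \<longrightarrow> E y x) \<and> (\<forall>x. \<not> E x x)"

definition walk_betw :: "'a set \<Rightarrow> ('a \<Rightarrow> 'a \<Rightarrow> bool) \<Rightarrow> 'a \<Rightarrow> 'a list \<Rightarrow> 'a \<Rightarrow> bool" where
  "walk_betw V E u xs v \<longleftrightarrow> xs \<noteq> [] \<and> set xs \<subseteq> V \<and>
     (\<forall>i. Suc i < length xs \<longrightarrow> E (xs ! i) (xs ! Suc i)) \<and> hd xs = u \<and> last xs = v"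

definition connected_graph :: "'a set \<Rightarrow> ('a \<Rightarrow> 'a \<Rightarrow> bool) \<Rightarrow> bool" where
  "connected_graph V E \<longleftrightarrow> V \<noteq> {} \<and> (\<forall>u\<in>V. \<forall>v\<in>V. \<exists>xs. walk_betw V E u xs v)"

definition gdist :: "'a set \<Rightarrow> ('a \<Rightarrow> 'a \<Rightarrow> bool) \<Rightarrow> 'a \<Rightarrow> 'a \<Rightarrow> nat" where
  "gdist V E u v = (LEAST n. \<exists>xs. walk_betw V E u xs v \<and> length xs = Suc n)"

definition shortest_path :: "'a set \<Rightarrow> ('a \<Rightarrow> 'a \<Rightarrow> bool) \<Rightarrow> 'a \<Rightarrow> 'a list \<Rightarrow> 'a \<Rightarrow> bool" where
  "shortest_path V E u xs v \<longleftrightarrow> walk_betw V E u xs v \<and> length xs = Suc (gdist V E u v)"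

definition X_visible :: "'a set \<Rightarrow> ('a \<Rightarrow> 'a \<Rightarrow> bool) \<Rightarrow> 'a set \<Rightarrow> 'a \<Rightarrow> 'a \<Rightarrow> bool" where
  "X_visible V E X u v \<longleftrightarrow>
     (\<exists>xs. shortest_path V E u xs v \<and> set (butlast (tl xs)) \<inter> X = {})"

definition total_mv_set :: "'a set \<Rightarrow> ('a \<Rightarrow> 'a \<Rightarrow> bool) \<Rightarrow> 'a set \<Rightarrow> bool" where
  "total_mv_set V E X \<longleftrightarrow> X \<subseteq> V \<and> (\<forall>u\<in>V. \<forall>v\<in>V. X_visible V E X u v)"

definition mu_t :: "'a set \<Rightarrow> ('a \<Rightarrow> 'a \<Rightarrow> bool) \<Rightarrow> nat" where
  "mu_t V E = Max {card X | X. total_mv_set V E X}"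

definition simplicial :: "'a set \<Rightarrow> ('a \<Rightarrow> 'a \<Rightarrow> bool) \<Rightarrow> 'a \<Rightarrow> bool" where
  "simplicial V E v \<longleftrightarrow> v \<in> V \<and> (\<forall>x y. E v x \<longrightarrow> E v y \<longrightarrow> x \<noteq> y \<longrightarrow> E x y)"

definition simplicial_set :: "'a set \<Rightarrow> ('a \<Rightarrow> 'a \<Rightarrow> bool) \<Rightarrow> 'a set" where
  "simplicial_set V E = {v \<in> V. simplicial V E v}"

definition closed_nbhd :: "'a set \<Rightarrow> ('a \<Rightarrow> 'a \<Rightarrow> bool) \<Rightarrow> 'a \<Rightarrow> 'a set" where
  "closed_nbhd V E v = insert v {u \<in> V. E v u}"

definition simplicial_twin_classes :: "'a set \<Rightarrow> ('a \<Rightarrow> 'a \<Rightarrow> bool) \<Rightarrow> 'a set set" where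
  "simplicial_twin_classes V E =
     (\<lambda>g. {g' \<in> simplicial_set V E. closed_nbhd V E g' = closed_nbhd V E g}) ` simplicial_set V E"

definition cart_edges :: "('a \<Rightarrow> 'a \<Rightarrow> bool) \<Rightarrow> ('b \<Rightarrow> 'b \<Rightarrow> bool) \<Rightarrow> 'a \<times> 'b \<Rightarrow> 'a \<times> 'b \<Rightarrow> bool" where
  "cart_edges E1 E2 p q \<longleftrightarrow>
     (fst p = fst q \<and> E2 (snd p) (snd q)) \<or> (E1 (fst p) (fst q) \<and> snd p = snd q)"

definition K_vertices :: "nat \<Rightarrow> nat set" where
  "K_vertices n = {0..<n}"

definition K_edges :: "nat \<Rightarrow> nat \<Rightarrow> bool" where
  "K_edges i j \<longleftrightarrow> i \<noteq> j"

end

theory Submission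
  imports Defs
begin

text \<open>
  A simplicial vertex is never an internal vertex of a shortest path, so the simplicial
  vertices can be added to every total mutual-visibility set; when \<open>\<mu>\<^sub>t(G) = |S(G)|\<close>
  this forces every such set of \<open>G\<close> into \<open>S(G)\<close>.  In \<open>G \<box> K\<^sub>n\<close> distances are
  \<open>d\<^sub>G(g,h)\<close> plus one for a change of layer, and the layers of a total mutual-visibility
  set \<open>X\<close> are total mutual-visibility sets of \<open>G\<close>; hence \<open>X \<subseteq> S(G) \<times> V(K\<^sub>n)\<close>.
  Moreover the only shortest paths between \<open>(g,i)\<close> and \<open>(h,j)\<close> for adjacent \<open>g, h\<close>
  and \<open>i \<noteq> j\<close> pass through \<open>(g,j)\<close> or \<open>(h,i)\<close>, so adjacent vertices of \<open>X\<close> share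
  their layer.  Distinct members of a true twin class \<open>C\<close> are adjacent, so \<open>X\<close> meets
  \<open>C \<times> V(K\<^sub>n)\<close> either in one layer or in one fibre \<open>{g} \<times> V(K\<^sub>n)\<close>: at most
  \<open>max |C| n\<close> vertices.  Conversely these two conditions already make a subset of
  \<open>S(G) \<times> V(K\<^sub>n)\<close> totally mutually visible, and choosing per class the larger of the
  layer \<open>C \<times> {k}\<close> and a fibre attains the bound.
\<close>

section \<open>Walks and distances\<close>

lemma walk_betw_iff:
  "walk_betw V E u xs v \<longleftrightarrow>
     xs \<noteq> [] \<and> set xs \<subseteq> V \<and> successively E xs \<and> hd xs = u \<and> last xs = v"
  unfolding walk_betw_def successively_conv_nth by blast

lemma gdist_less_length:
  assumes "walk_betw V E u xs v"
  shows "gdist V E u v < length xs"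
proof -
  from assms have len: "length xs = Suc (length xs - 1)"
    by (cases xs) (auto simp: walk_betw_iff)
  with assms have "gdist V E u v \<le> length xs - 1"
    unfolding gdist_def by (intro Least_le) metis
  with len show ?thesis by linarith
qed

lemma shortest_path_exists:
  assumes "walk_betw V E u xs v"
  shows "\<exists>ys. shortest_path V E u ys v"
proof -
  from assms have "length xs = Suc (length xs - 1)"
    by (cases xs) (auto simp: walk_betw_iff)
  with assms have "\<exists>n ys. walk_betw V E u ys v \<and> length ys = Suc n"
    by blast
  then show ?thesis
    unfolding shortest_path_def gdist_def by (rule LeastI_ex)
qed

lemma connected_shortest_path:
  "connected_graph V E \<Longrightarrow> u \<in> V \<Longrightarrow> v \<in> V \<Longrightarrow> \<exists>xs. shortest_path V E u xs v"
  unfolding connected_graph_def using shortest_path_exists by metis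

lemma shortest_pathI:
  "walk_betw V E u xs v \<Longrightarrow> length xs \<le> Suc (gdist V E u v) \<Longrightarrow> shortest_path V E u xs v"
  unfolding shortest_path_def using gdist_less_length by (metis Suc_leI le_antisym)

lemma walk_betw_Cons:
  "walk_betw V E m xs v \<Longrightarrow> E u m \<Longrightarrow> u \<in> V \<Longrightarrow> walk_betw V E u (u # xs) v"
  by (cases xs) (auto simp: walk_betw_iff)

lemma gdist_adjacent:
  assumes "simple_graph V E" and "E u v"
  shows "gdist V E u v = 1"
proof -
  from assms have uv: "u \<in> V" "v \<in> V" "u \<noteq> v"
    unfolding simple_graph_def by blast+
  with \<open>E u v\<close> have "walk_betw V E u [u, v] v"
    by (simp add: walk_betw_iff)
  then have "gdist V E u v < 2"
    using gdist_less_length by fastforce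
  moreover have "gdist V E u v \<noteq> 0"
  proof
    assume "gdist V E u v = 0"
    moreover obtain ys where "shortest_path V E u ys v"
      using shortest_path_exists[OF \<open>walk_betw V E u [u, v] v\<close>] by blast
    ultimately obtain y where "walk_betw V E u [y] v"
      by (auto simp: shortest_path_def length_Suc_conv)
    with \<open>u \<noteq> v\<close> show False
      by (auto simp: walk_betw_iff)
  qed
  ultimately show ?thesis by simp
qed

section \<open>Simplicial vertices\<close>

lemma in_set_butlast_tl_split:
  assumes "b \<in> set (butlast (tl xs))"
  shows "\<exists>as a c bs. xs = as @ [a, b, c] @ bs"
proof -
  obtain ys zs where yz: "butlast (tl xs) = ys @ b # zs"
    using assms by (meson split_list)
  have "tl xs \<noteq> []"
    using assms by auto
  then have xs: "xs = hd xs # tl xs" and tl: "tl xs = butlast (tl xs) @ [last (tl xs)]"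
    by (cases xs, auto)+
  let ?l = "last (tl xs)"
  have "xs = butlast (hd xs # ys) @ [last (hd xs # ys), b, hd (zs @ [?l])] @ tl (zs @ [?l])"
    by (subst xs, subst tl) (simp add: yz)
  then show ?thesis by blast
qed

lemma shortest_path_internal_not_simplicial:
  assumes sg: "simple_graph V E" and sp: "shortest_path V E u xs v"
    and b: "b \<in> set (butlast (tl xs))"
  shows "\<not> simplicial V E b"
proof
  assume simp_b: "simplicial V E b"
  obtain as a c bs where xs: "xs = as @ [a, b, c] @ bs"
    using in_set_butlast_tl_split[OF b] by blast
  have walk: "walk_betw V E u xs v" and len: "length xs = Suc (gdist V E u v)"
    using sp by (auto simp: shortest_path_def)
  have succ: "successively E xs"
    using walk by (simp add: walk_betw_iff)
  then have "E a b" "E b c"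
    unfolding xs by (auto simp: successively_append_iff)
  then have "a \<noteq> c \<Longrightarrow> E a c"
    using simp_b sg unfolding simplicial_def simple_graph_def by blast
  \<comment> \<open>so \<open>b\<close> can be cut out of the path\<close>
  define ys where "ys = as @ (if a = c then [a] else [a, c]) @ bs"
  have "successively E ys"
    using succ \<open>a \<noteq> c \<Longrightarrow> E a c\<close> unfolding xs ys_def
    by (auto simp: successively_append_iff successively_Cons)
  moreover have "set ys \<subseteq> set xs" "hd ys = hd xs" "last ys = last xs"
    unfolding xs ys_def by (cases as; cases bs rule: rev_cases; auto)+
  ultimately have "walk_betw V E u ys v"
    using walk unfolding walk_betw_iff ys_def by auto
  moreover have "length ys < length xs"
    unfolding xs ys_def by auto
  ultimately show False
    using gdist_less_length len by fastforce
qed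

lemma total_mv_setD:
  "total_mv_set V E X \<Longrightarrow> u \<in> V \<Longrightarrow> v \<in> V \<Longrightarrow>
     \<exists>xs. shortest_path V E u xs v \<and> set (butlast (tl xs)) \<inter> X = {}"
  unfolding total_mv_set_def X_visible_def by blast

lemma total_mv_set_Un_simplicial_set:
  assumes "simple_graph V E" and "total_mv_set V E X"
  shows "total_mv_set V E (X \<union> simplicial_set V E)"
  using assms shortest_path_internal_not_simplicial[OF assms(1)]
  unfolding total_mv_set_def X_visible_def simplicial_set_def by blast

lemma card_le_mu_t:
  assumes "simple_graph V E" and "total_mv_set V E X"
  shows "card X \<le> mu_t V E"
proof -
  have "{card X | X. total_mv_set V E X} \<subseteq> {..card V}"
    using assms(1) by (auto simp: total_mv_set_def simple_graph_def intro: card_mono)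
  then show ?thesis
    unfolding mu_t_def using assms(2) by (intro Max_ge) (auto dest: finite_subset)
qed

lemma mu_t_eqI:
  assumes "\<And>X. total_mv_set V E X \<Longrightarrow> card X \<le> m"
    and "total_mv_set V E Y" and "card Y = m"
  shows "mu_t V E = m"
proof -
  have "{card X | X. total_mv_set V E X} \<subseteq> {..m}"
    using assms(1) by auto
  then show ?thesis
    unfolding mu_t_def using assms by (intro Max_eqI) (auto dest: finite_subset)
qed

lemma total_mv_set_subset_simplicial_set:
  assumes sg: "simple_graph V E" and mu: "mu_t V E = card (simplicial_set V E)"
    and X: "total_mv_set V E X"
  shows "X \<subseteq> simplicial_set V E"
proof -
  let ?S = "simplicial_set V E"
  have XS: "total_mv_set V E (X \<union> ?S)"
    using total_mv_set_Un_simplicial_set[OF sg X] .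
  then have "card (X \<union> ?S) \<le> card ?S"
    using card_le_mu_t[OF sg] mu by metis
  moreover have "finite (X \<union> ?S)"
    using XS sg finite_subset by (auto simp: total_mv_set_def simple_graph_def)
  ultimately show ?thesis
    by (metis Un_upper2 card_mono card_subset_eq le_antisym Un_upper1)
qed

section \<open>The Cartesian product with a complete graph\<close>

lemma cart_edges_K_edges_iff:
  "cart_edges E K_edges p q \<longleftrightarrow>
     (fst p = fst q \<and> snd p \<noteq> snd q) \<or> (E (fst p) (fst q) \<and> snd p = snd q)"
  by (auto simp: cart_edges_def K_edges_def)

text \<open>
  Skipping the steps that change layer projects a walk of \<open>G \<box> K\<close> to a walk of \<open>G\<close>,
  which is strictly shorter unless the walk stays in one layer.
\<close>

lemma successively_cart_edges_project:
  assumes "ws \<noteq> []" "set ws \<subseteq> V \<times> K" "successively (cart_edges E K_edges) ws"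
  shows "(successively E (map fst ws) \<and> (\<forall>x\<in>set ws. snd x = snd (hd ws))) \<or>
         (\<exists>gs. walk_betw V E (fst (hd ws)) gs (fst (last ws)) \<and> length gs < length ws)"
  using assms
proof (induction ws)
  case Nil
  then show ?case by simp
next
  case (Cons w ws)
  show ?case
  proof (cases "ws = []")
    case True
    then show ?thesis by simp
  next
    case False
    have step: "cart_edges E K_edges w (hd ws)" and "successively (cart_edges E K_edges) ws"
      using Cons.prems(3) False by (simp_all add: successively_Cons)
    with Cons.prems(2) have IH:
      "(successively E (map fst ws) \<and> (\<forall>x\<in>set ws. snd x = snd (hd ws))) \<or>
       (\<exists>gs. walk_betw V E (fst (hd ws)) gs (fst (last ws)) \<and> length gs < length ws)"
      by (intro Cons.IH[OF False]) auto
    have "fst w \<in> V" "last (w # ws) = last ws"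
      using Cons.prems(2) False by auto
    consider (stay) "fst w = fst (hd ws)" | (move) "E (fst w) (fst (hd ws))" "snd w = snd (hd ws)"
      using step by (auto simp: cart_edges_K_edges_iff)
    then show ?thesis
    proof cases
      case stay
      have "walk_betw V E (fst (hd ws)) (map fst ws) (fst (last ws))"
        if "successively E (map fst ws)"
        using that Cons.prems(2) False by (auto simp: walk_betw_iff hd_map last_map)
      with IH stay show ?thesis
        using \<open>last (w # ws) = last ws\<close> by auto
    next
      case move
      have "walk_betw V E (fst w) (fst w # gs) (fst (last ws))"
        if "walk_betw V E (fst (hd ws)) gs (fst (last ws))" for gs
        by (rule walk_betw_Cons[OF that move(1) \<open>fst w \<in> V\<close>])
      moreover have "successively E (map fst (w # ws))" if "successively E (map fst ws)"
        using that move(1) False by (simp add: successively_Cons hd_map)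
      ultimately show ?thesis
        using IH move(2) \<open>last (w # ws) = last ws\<close> by (metis Suc_mono length_Cons list.sel(1)
            list.set_intros(1) set_ConsD)
    qed
  qed
qed

lemma walk_cart_project:
  assumes "walk_betw (V \<times> K) (cart_edges E K_edges) (u, i) ws (v, j)"
  shows "(walk_betw V E u (map fst ws) v \<and> (\<forall>x\<in>set ws. snd x = i)) \<or>
         (\<exists>gs. walk_betw V E u gs v \<and> length gs < length ws)"
proof -
  have ws: "ws \<noteq> []" "set ws \<subseteq> V \<times> K" "successively (cart_edges E K_edges) ws"
    "hd ws = (u, i)" "last ws = (v, j)"
    using assms by (auto simp: walk_betw_iff)
  then have "set (map fst ws) \<subseteq> V" by auto
  with successively_cart_edges_project[OF ws(1-3)] ws show ?thesis
    by (auto simp: walk_betw_iff hd_map last_map)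
qed

lemma walk_cart_lift:
  assumes "walk_betw V E u gs v" and "i \<in> K"
  shows "walk_betw (V \<times> K) (cart_edges E K_edges) (u, i) (map (\<lambda>g. (g, i)) gs) (v, i)"
proof -
  have "successively (\<lambda>x y. cart_edges E K_edges (x, i) (y, i)) gs"
    using assms(1) by (auto simp: walk_betw_iff cart_edges_def elim: successively_mono)
  then show ?thesis
    using assms by (auto simp: walk_betw_iff successively_map hd_map last_map)
qed

lemma walk_cart_K_edges:
  assumes con: "connected_graph V E" and uv: "u \<in> V" "v \<in> V" and ij: "i \<in> K" "j \<in> K"
  shows "\<exists>ws. walk_betw (V \<times> K) (cart_edges E K_edges) (u, i) ws (v, j) \<and>
           length ws = Suc (gdist V E u v + (if i = j then 0 else 1))"
proof -
  obtain ps where ps: "walk_betw V E u ps v" "length ps = Suc (gdist V E u v)"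
    using connected_shortest_path[OF con uv] by (auto simp: shortest_path_def)
  show ?thesis
  proof (cases "i = j")
    case True
    then show ?thesis
      using walk_cart_lift[OF ps(1) ij(1)] ps(2) by auto
  next
    case False
    have "walk_betw (V \<times> K) (cart_edges E K_edges) (u, i) ((u, i) # map (\<lambda>g. (g, j)) ps) (v, j)"
      using walk_cart_lift[OF ps(1) ij(2)] False uv ij
      by (intro walk_betw_Cons) (auto simp: cart_edges_def K_edges_def)
    then show ?thesis
      using False ps(2) by fastforce
  qed
qed

lemma gdist_cart_K_edges:
  assumes con: "connected_graph V E" and uv: "u \<in> V" "v \<in> V" and ij: "i \<in> K" "j \<in> K"
  shows "gdist (V \<times> K) (cart_edges E K_edges) (u, i) (v, j) =
           gdist V E u v + (if i = j then 0 else 1)"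
    (is "?D = ?d")
proof -
  obtain ws0 where ws0: "walk_betw (V \<times> K) (cart_edges E K_edges) (u, i) ws0 (v, j)"
    "length ws0 = Suc ?d"
    using walk_cart_K_edges[OF assms] by blast
  then have upper: "?D \<le> ?d"
    using gdist_less_length by fastforce
  obtain ws where ws: "walk_betw (V \<times> K) (cart_edges E K_edges) (u, i) ws (v, j)"
    "length ws = Suc ?D"
    using shortest_path_exists[OF ws0(1)] by (auto simp: shortest_path_def)
  have "?d \<le> ?D"
    using walk_cart_project[OF ws(1)]
  proof
    assume proj: "walk_betw V E u (map fst ws) v \<and> (\<forall>x\<in>set ws. snd x = i)"
    have "ws \<noteq> []" "last ws = (v, j)"
      using ws(1) by (simp_all add: walk_betw_iff)
    then have "i = j"
      using proj last_in_set[of ws] by fastforce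
    with proj show ?thesis
      using gdist_less_length[of V E u "map fst ws" v] ws(2) by auto
  next
    assume "\<exists>gs. walk_betw V E u gs v \<and> length gs < length ws"
    then show ?thesis
      using gdist_less_length ws(2) by fastforce
  qed
  with upper show ?thesis by simp
qed

lemma total_mv_set_cart_layer:
  assumes con: "connected_graph V E"
    and X: "total_mv_set (V \<times> K) (cart_edges E K_edges) X" and i: "i \<in> K"
  shows "total_mv_set V E {g. (g, i) \<in> X}"
  unfolding total_mv_set_def
proof (intro conjI ballI)
  show "{g. (g, i) \<in> X} \<subseteq> V"
    using X by (auto simp: total_mv_set_def)
  fix u v assume uv: "u \<in> V" "v \<in> V"
  then obtain ws where sp: "shortest_path (V \<times> K) (cart_edges E K_edges) (u, i) ws (v, i)"
    and avoid: "set (butlast (tl ws)) \<inter> X = {}"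
    using total_mv_setD[OF X, of "(u, i)" "(v, i)"] i by auto
  have walk: "walk_betw (V \<times> K) (cart_edges E K_edges) (u, i) ws (v, i)"
    and len: "length ws = Suc (gdist V E u v)"
    using sp gdist_cart_K_edges[OF con uv i i] by (simp_all add: shortest_path_def)
  from walk_cart_project[OF walk] show "X_visible V E {g. (g, i) \<in> X} u v"
  proof
    assume "\<exists>gs. walk_betw V E u gs v \<and> length gs < length ws"
    then show ?thesis
      using gdist_less_length len by fastforce
  next
    assume proj: "walk_betw V E u (map fst ws) v \<and> (\<forall>x\<in>set ws. snd x = i)"
    then have "shortest_path V E u (map fst ws) v"
      using len by (intro shortest_pathI) auto
    moreover have "x = (fst x, i)" if "x \<in> set (butlast (tl ws))" for x
    proof -
      have "x \<in> set ws"
        using that by (cases ws) (auto dest: in_set_butlastD)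
      with proj show ?thesis
        by (metis prod.collapse)
    qed
    then have "set (butlast (tl (map fst ws))) \<inter> {g. (g, i) \<in> X} = {}"
      using avoid by (auto simp flip: map_butlast map_tl)
    ultimately show ?thesis
      unfolding X_visible_def by blast
  qed
qed

lemma total_mv_set_cart_adjacent_same_layer:
  assumes sg: "simple_graph V E" and con: "connected_graph V E"
    and X: "total_mv_set (V \<times> K) (cart_edges E K_edges) X"
    and "E g h" and gi: "(g, i) \<in> X" and hj: "(h, j) \<in> X"
  shows "i = j"
proof (rule ccontr)
  assume "i \<noteq> j"
  have "g \<in> V" "h \<in> V" "i \<in> K" "j \<in> K"
    using X gi hj by (auto simp: total_mv_set_def)
  then obtain ws where sp: "shortest_path (V \<times> K) (cart_edges E K_edges) (h, i) ws (g, j)"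
    and avoid: "set (butlast (tl ws)) \<inter> X = {}"
    using total_mv_setD[OF X, of "(h, i)" "(g, j)"] by auto
  have "E h g" "g \<noteq> h"
    using sg \<open>E g h\<close> unfolding simple_graph_def by blast+
  then have "length ws = 3"
    using sp gdist_cart_K_edges[OF con \<open>h \<in> V\<close> \<open>g \<in> V\<close> \<open>i \<in> K\<close> \<open>j \<in> K\<close>]
      gdist_adjacent[OF sg] \<open>i \<noteq> j\<close>
    by (simp add: shortest_path_def)
  then obtain b where "walk_betw (V \<times> K) (cart_edges E K_edges) (h, i) [(h, i), b, (g, j)] (g, j)"
    and "b \<notin> X"
    using sp avoid by (auto simp: shortest_path_def walk_betw_iff numeral_3_eq_3 length_Suc_conv)
  then have "cart_edges E K_edges (h, i) b" "cart_edges E K_edges b (g, j)"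
    by (simp_all add: walk_betw_iff)
  then have "b = (g, i) \<or> b = (h, j)"
    using \<open>g \<noteq> h\<close> \<open>i \<noteq> j\<close> by (cases b) (auto simp: cart_edges_K_edges_iff)
  with \<open>b \<notin> X\<close> gi hj show False by blast
qed

lemma total_mv_set_cart_subset:
  assumes sg: "simple_graph V E" and con: "connected_graph V E"
    and mu: "mu_t V E = card (simplicial_set V E)"
    and X: "total_mv_set (V \<times> K) (cart_edges E K_edges) X"
  shows "X \<subseteq> simplicial_set V E \<times> K"
proof
  fix p assume "p \<in> X"
  moreover obtain g i where p: "p = (g, i)" by (cases p)
  ultimately have "i \<in> K" "g \<in> {g. (g, i) \<in> X}"
    using X by (auto simp: total_mv_set_def)
  then show "p \<in> simplicial_set V E \<times> K"
    using total_mv_set_subset_simplicial_set[OF sg mu total_mv_set_cart_layer[OF con X]] p by blast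
qed

lemma walk_cart_detour:
  assumes walk: "walk_betw V E u (u # m # ms) v" and ij: "i \<in> K" "j \<in> K" "i \<noteq> j"
  shows "walk_betw (V \<times> K) (cart_edges E K_edges) (u, i)
           ((u, i) # (m, i) # map (\<lambda>g. (g, j)) (m # ms)) (v, j)"
proof -
  have mwalk: "walk_betw V E m (m # ms) v" and "E u m" "u \<in> V" "m \<in> V"
    using walk by (auto simp: walk_betw_iff)
  from walk_cart_lift[OF mwalk ij(2)]
  have "walk_betw (V \<times> K) (cart_edges E K_edges) (m, j) (map (\<lambda>g. (g, j)) (m # ms)) (v, j)" .
  then have "walk_betw (V \<times> K) (cart_edges E K_edges) (m, i) ((m, i) # map (\<lambda>g. (g, j)) (m # ms)) (v, j)"
    using \<open>m \<in> V\<close> ij by (intro walk_betw_Cons) (auto simp: cart_edges_def K_edges_def)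
  then show ?thesis
    using \<open>E u m\<close> \<open>u \<in> V\<close> ij by (intro walk_betw_Cons) (auto simp: cart_edges_def)
qed

lemma walk_cart_avoiding:
  assumes walk: "walk_betw V E u ps v" and ij: "i \<in> K" "j \<in> K"
    and avoid: "\<And>x k. x \<in> set (butlast (tl ps)) \<Longrightarrow> (x, k) \<notin> X"
    and layer: "\<And>g h i j. E g h \<Longrightarrow> (g, i) \<in> X \<Longrightarrow> (h, j) \<in> X \<Longrightarrow> i = j"
  shows "\<exists>ws. walk_betw (V \<times> K) (cart_edges E K_edges) (u, i) ws (v, j) \<and>
           length ws = length ps + (if i = j then 0 else 1) \<and> set (butlast (tl ws)) \<inter> X = {}"
proof (cases "i = j")
  case True
  have "butlast (tl (map (\<lambda>g. (g, i)) ps)) = map (\<lambda>g. (g, i)) (butlast (tl ps))"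
    by (simp add: map_butlast map_tl)
  then show ?thesis
    using walk_cart_lift[OF walk ij(1)] True avoid by (intro exI[of _ "map (\<lambda>g. (g, i)) ps"]) auto
next
  case False
  have uv: "u \<in> V" "v \<in> V" and "ps \<noteq> []" "hd ps = u"
    using walk by (auto simp: walk_betw_iff)
  then consider "ps = [u]" | m ms where "ps = u # m # ms"
    by (metis list.collapse)
  then show ?thesis
  proof cases
    case 1
    then have "walk_betw (V \<times> K) (cart_edges E K_edges) (u, i) [(u, i), (u, j)] (v, j)"
      using walk ij False by (auto simp: walk_betw_iff cart_edges_def K_edges_def)
    then show ?thesis
      using 1 False by fastforce
  next
    case (2 m ms)
    show ?thesis
    proof (cases "ms = [] \<and> (v, i) \<in> X")
      case True
      then have "ps = [u, v]"
        using 2 walk by (simp add: walk_betw_iff)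
      then have "E u v"
        using walk by (simp add: walk_betw_iff)
      \<comment> \<open>at least one of the two corners of the square is free\<close>
      then have "(u, j) \<notin> X"
        using layer True False by blast
      moreover have "walk_betw (V \<times> K) (cart_edges E K_edges) (u, i) [(u, i), (u, j), (v, j)] (v, j)"
        using \<open>E u v\<close> uv ij False by (auto simp: walk_betw_iff cart_edges_def K_edges_def)
      ultimately show ?thesis
        using \<open>ps = [u, v]\<close> False by fastforce
    next
      case False
      have "(m, i) \<notin> X"
        using False avoid[of m i] 2 walk by (cases ms) (auto simp: walk_betw_iff)
      moreover have "butlast (tl ps) = butlast (m # ms)"
        using 2 by simp
      ultimately show ?thesis
        using walk_cart_detour[OF walk[unfolded 2] ij \<open>i \<noteq> j\<close>] 2 \<open>i \<noteq> j\<close> avoid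
        by (intro exI[of _ "(u, i) # (m, i) # map (\<lambda>g. (g, j)) (m # ms)"])
          (auto simp flip: map_butlast)
    qed
  qed
qed

lemma total_mv_set_cartI:
  assumes sg: "simple_graph V E" and con: "connected_graph V E"
    and XS: "X \<subseteq> simplicial_set V E \<times> K"
    and layer: "\<And>g h i j. E g h \<Longrightarrow> (g, i) \<in> X \<Longrightarrow> (h, j) \<in> X \<Longrightarrow> i = j"
  shows "total_mv_set (V \<times> K) (cart_edges E K_edges) X"
  unfolding total_mv_set_def
proof (intro conjI ballI)
  show "X \<subseteq> V \<times> K"
    using XS by (auto simp: simplicial_set_def)
  fix p q assume "p \<in> V \<times> K" "q \<in> V \<times> K"
  then obtain u i v j where pq: "p = (u, i)" "q = (v, j)" and uv: "u \<in> V" "v \<in> V"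
    and ij: "i \<in> K" "j \<in> K"
    by auto
  obtain ps where sp: "shortest_path V E u ps v"
    using connected_shortest_path[OF con uv] by blast
  have avoid: "(x, k) \<notin> X" if "x \<in> set (butlast (tl ps))" for x k
    using shortest_path_internal_not_simplicial[OF sg sp that] XS
    by (auto simp: simplicial_set_def)
  have walk: "walk_betw V E u ps v"
    using sp by (simp add: shortest_path_def)
  have "\<exists>ws. walk_betw (V \<times> K) (cart_edges E K_edges) (u, i) ws (v, j) \<and>
      length ws = length ps + (if i = j then 0 else 1) \<and> set (butlast (tl ws)) \<inter> X = {}"
    using walk ij avoid layer by (rule walk_cart_avoiding)
  then obtain ws where ws: "walk_betw (V \<times> K) (cart_edges E K_edges) (u, i) ws (v, j)"
    "length ws = length ps + (if i = j then 0 else 1)" "set (butlast (tl ws)) \<inter> X = {}"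
    by blast
  then have "shortest_path (V \<times> K) (cart_edges E K_edges) (u, i) ws (v, j)"
    using sp gdist_cart_K_edges[OF con uv ij] by (intro shortest_pathI) (simp_all add: shortest_path_def)
  with ws(3) show "X_visible (V \<times> K) (cart_edges E K_edges) X p q"
    unfolding pq X_visible_def by blast
qed

section \<open>True twin classes\<close>

definition true_twin_class :: "'a set \<Rightarrow> ('a \<Rightarrow> 'a \<Rightarrow> bool) \<Rightarrow> 'a \<Rightarrow> 'a set" where
  "true_twin_class V E g = {g' \<in> simplicial_set V E. closed_nbhd V E g' = closed_nbhd V E g}"

lemma simplicial_twin_classes_eq:
  "simplicial_twin_classes V E = true_twin_class V E ` simplicial_set V E"
  unfolding simplicial_twin_classes_def true_twin_class_def ..

lemma Union_simplicial_twin_classes: "\<Union> (simplicial_twin_classes V E) = simplicial_set V E"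
  unfolding simplicial_twin_classes_eq true_twin_class_def by blast

lemma simplicial_twin_classes_disjoint:
  "C \<in> simplicial_twin_classes V E \<Longrightarrow> D \<in> simplicial_twin_classes V E \<Longrightarrow> C \<noteq> D \<Longrightarrow> C \<inter> D = {}"
  unfolding simplicial_twin_classes_eq true_twin_class_def by blast

lemma simplicial_twin_class_nonempty: "C \<in> simplicial_twin_classes V E \<Longrightarrow> C \<noteq> {}"
  unfolding simplicial_twin_classes_eq true_twin_class_def by blast

lemma simplicial_twin_class_subset:
  "C \<in> simplicial_twin_classes V E \<Longrightarrow> C \<subseteq> simplicial_set V E"
  unfolding simplicial_twin_classes_eq true_twin_class_def by blast

lemma finite_simplicial_twin_classes:
  assumes "simple_graph V E"
  shows "finite (simplicial_twin_classes V E)" "C \<in> simplicial_twin_classes V E \<Longrightarrow> finite C"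
proof -
  have fin: "finite (simplicial_set V E)"
    using assms by (simp add: simple_graph_def simplicial_set_def)
  then show "finite (simplicial_twin_classes V E)"
    by (simp add: simplicial_twin_classes_eq)
  show "finite C" if "C \<in> simplicial_twin_classes V E"
    using finite_subset[OF simplicial_twin_class_subset[OF that] fin] .
qed

lemma simplicial_twin_class_adjacent:
  assumes "C \<in> simplicial_twin_classes V E" "x \<in> C" "y \<in> C" "x \<noteq> y"
  shows "E x y"
proof -
  have "closed_nbhd V E x = closed_nbhd V E y"
    using assms(1-3) by (auto simp: simplicial_twin_classes_eq true_twin_class_def)
  then have "y \<in> closed_nbhd V E x"
    by (simp add: closed_nbhd_def)
  with assms(4) show ?thesis
    by (simp add: closed_nbhd_def)
qed

lemma closed_nbhd_subset_if_simplicial: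
  assumes "simple_graph V E" "simplicial V E u" "E u v"
  shows "closed_nbhd V E u \<subseteq> closed_nbhd V E v"
  using assms unfolding closed_nbhd_def simplicial_def simple_graph_def by blast

lemma adjacent_simplicial_same_twin_class:
  assumes sg: "simple_graph V E"
    and C: "C \<in> simplicial_twin_classes V E" and D: "D \<in> simplicial_twin_classes V E"
    and "u \<in> C" "v \<in> D" "E u v"
  shows "C = D"
proof -
  have "u \<in> simplicial_set V E" "v \<in> simplicial_set V E"
    using simplicial_twin_class_subset C D \<open>u \<in> C\<close> \<open>v \<in> D\<close> by blast+
  moreover have "E v u"
    using sg \<open>E u v\<close> by (simp add: simple_graph_def)
  ultimately have "simplicial V E u" "simplicial V E v" "E v u"
    by (simp_all add: simplicial_set_def)
  then have "closed_nbhd V E u = closed_nbhd V E v"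
    using closed_nbhd_subset_if_simplicial[OF sg] \<open>E u v\<close> by blast
  with assms show ?thesis
    by (auto simp: simplicial_twin_classes_eq true_twin_class_def)
qed

section \<open>The upper bound\<close>

lemma sum_card_le_max_card:
  fixes f :: "'a \<Rightarrow> 'b set"
  assumes fin: "finite C" "finite K" and sub: "\<And>g. g \<in> C \<Longrightarrow> f g \<subseteq> K"
    and share: "\<And>x y i j. x \<in> C \<Longrightarrow> y \<in> C \<Longrightarrow> x \<noteq> y \<Longrightarrow> i \<in> f x \<Longrightarrow> j \<in> f y \<Longrightarrow> i = j"
  shows "(\<Sum>g\<in>C. card (f g)) \<le> max (card C) (card K)"
proof (cases "\<forall>g\<in>C. card (f g) \<le> 1")
  case True
  then have "(\<Sum>g\<in>C. card (f g)) \<le> (\<Sum>g\<in>C. 1)"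
    by (intro sum_mono) simp
  then show ?thesis by simp
next
  case False
  then obtain g0 where g0: "g0 \<in> C" "card (f g0) > 1"
    by auto
  \<comment> \<open>two values at \<open>g0\<close> cannot both equal the single value at another \<open>g\<close>\<close>
  have "f g = {}" if "g \<in> C" "g \<noteq> g0" for g
  proof (rule ccontr)
    assume "f g \<noteq> {}"
    then obtain j where "j \<in> f g" by blast
    then have "f g0 \<subseteq> {j}"
      using share[OF g0(1) that(1)] that(2) by blast
    with g0(2) show False
      using card_mono[of "{j}" "f g0"] by simp
  qed
  then have "(\<Sum>g\<in>C. card (f g)) = card (f g0)"
    using fin(1) g0(1) by (simp add: sum.remove)
  also have "\<dots> \<le> card K"
    using card_mono[OF fin(2) sub[OF g0(1)]] .
  finally show ?thesis by simp
qed

lemma card_total_mv_set_cart_le: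
  assumes sg: "simple_graph V E" and con: "connected_graph V E"
    and mu: "mu_t V E = card (simplicial_set V E)" and K: "finite K"
    and X: "total_mv_set (V \<times> K) (cart_edges E K_edges) X"
  shows "card X \<le> (\<Sum>C\<in>simplicial_twin_classes V E. max (card C) (card K))"
proof -
  let ?S = "simplicial_set V E" and ?C = "simplicial_twin_classes V E"
  define fibre where "fibre g = {i. (g, i) \<in> X}" for g
  have XS: "X \<subseteq> ?S \<times> K"
    using total_mv_set_cart_subset[OF sg con mu X] .
  then have fibre_sub: "fibre g \<subseteq> K" for g
    by (auto simp: fibre_def)
  have "X = Sigma ?S fibre"
    using XS by (auto simp: fibre_def)
  moreover have "finite ?S" "finite (fibre g)" for g
    using sg finite_subset[OF fibre_sub K] by (simp_all add: simple_graph_def simplicial_set_def)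
  ultimately have "card X = (\<Sum>g\<in>?S. card (fibre g))"
    by simp
  also have "\<dots> = (\<Sum>C\<in>?C. \<Sum>g\<in>C. card (fibre g))"
    unfolding Union_simplicial_twin_classes[symmetric]
    using finite_simplicial_twin_classes(2)[OF sg]
    by (subst sum.Union_disjoint) (auto dest: simplicial_twin_classes_disjoint)
  also have "\<dots> \<le> (\<Sum>C\<in>?C. max (card C) (card K))"
  proof (rule sum_mono)
    fix C assume C: "C \<in> ?C"
    have "i = j" if "x \<in> C" "y \<in> C" "x \<noteq> y" "i \<in> fibre x" "j \<in> fibre y" for x y i j
      using total_mv_set_cart_adjacent_same_layer[OF sg con X]
        simplicial_twin_class_adjacent[OF C that(1-3)] that(4,5)
      by (simp add: fibre_def)
    then show "(\<Sum>g\<in>C. card (fibre g)) \<le> max (card C) (card K)"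
      using sum_card_le_max_card finite_simplicial_twin_classes(2)[OF sg C] K fibre_sub by blast
  qed
  finally show ?thesis .
qed

section \<open>The extremal set\<close>

definition twin_class_witness :: "'b set \<Rightarrow> 'a set \<Rightarrow> ('a \<times> 'b) set" where
  "twin_class_witness K C =
     (if card K \<le> card C then C \<times> {SOME k. k \<in> K} else {SOME g. g \<in> C} \<times> K)"

definition mv_witness :: "'a set \<Rightarrow> ('a \<Rightarrow> 'a \<Rightarrow> bool) \<Rightarrow> 'b set \<Rightarrow> ('a \<times> 'b) set" where
  "mv_witness V E K = \<Union> (twin_class_witness K ` simplicial_twin_classes V E)"

lemma twin_class_witness_subset:
  "C \<noteq> {} \<Longrightarrow> K \<noteq> {} \<Longrightarrow> twin_class_witness K C \<subseteq> C \<times> K"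
  unfolding twin_class_witness_def by (auto simp: some_in_eq)

lemma card_twin_class_witness:
  "finite C \<Longrightarrow> finite K \<Longrightarrow> card (twin_class_witness K C) = max (card C) (card K)"
  unfolding twin_class_witness_def by (simp add: card_cartesian_product max_def)

lemma twin_class_witness_same_layer:
  "(g, i) \<in> twin_class_witness K C \<Longrightarrow> (h, j) \<in> twin_class_witness K C \<Longrightarrow> g \<noteq> h \<Longrightarrow> i = j"
  unfolding twin_class_witness_def by (auto split: if_splits)

lemma mv_witness_subset:
  assumes "K \<noteq> {}"
  shows "mv_witness V E K \<subseteq> simplicial_set V E \<times> K"
proof -
  have "twin_class_witness K C \<subseteq> simplicial_set V E \<times> K" if "C \<in> simplicial_twin_classes V E" for C
    using twin_class_witness_subset[OF simplicial_twin_class_nonempty[OF that] assms]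
      simplicial_twin_class_subset[OF that] by blast
  then show ?thesis
    unfolding mv_witness_def by blast
qed

lemma card_mv_witness:
  assumes sg: "simple_graph V E" and K: "finite K" "K \<noteq> {}"
  shows "card (mv_witness V E K) = (\<Sum>C\<in>simplicial_twin_classes V E. max (card C) (card K))"
proof -
  have "card (mv_witness V E K) = (\<Sum>C\<in>simplicial_twin_classes V E. card (twin_class_witness K C))"
    unfolding mv_witness_def
  proof (rule card_UN_disjoint)
    show "finite (simplicial_twin_classes V E)"
      using finite_simplicial_twin_classes(1)[OF sg] .
    show "\<forall>C\<in>simplicial_twin_classes V E. finite (twin_class_witness K C)"
      using finite_simplicial_twin_classes(2)[OF sg] K(1)
      by (simp add: twin_class_witness_def)
    show "\<forall>C\<in>simplicial_twin_classes V E. \<forall>D\<in>simplicial_twin_classes V E.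
            C \<noteq> D \<longrightarrow> twin_class_witness K C \<inter> twin_class_witness K D = {}"
    proof (intro ballI impI)
      fix C D
      assume C: "C \<in> simplicial_twin_classes V E" and D: "D \<in> simplicial_twin_classes V E"
        and "C \<noteq> D"
      then have "C \<inter> D = {}"
        by (rule simplicial_twin_classes_disjoint)
      moreover have "twin_class_witness K C \<subseteq> C \<times> K" "twin_class_witness K D \<subseteq> D \<times> K"
        using twin_class_witness_subset[OF simplicial_twin_class_nonempty K(2)] C D by blast+
      ultimately show "twin_class_witness K C \<inter> twin_class_witness K D = {}"
        by blast
    qed
  qed
  then show ?thesis
    using finite_simplicial_twin_classes(2)[OF sg] K(1) by (simp add: card_twin_class_witness)
qed

lemma mv_witness_adjacent_same_layer:
  assumes sg: "simple_graph V E" and K: "K \<noteq> {}" and "E g h"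
    and "(g, i) \<in> mv_witness V E K" "(h, j) \<in> mv_witness V E K"
  shows "i = j"
proof -
  obtain C D where C: "C \<in> simplicial_twin_classes V E" "(g, i) \<in> twin_class_witness K C"
    and D: "D \<in> simplicial_twin_classes V E" "(h, j) \<in> twin_class_witness K D"
    using assms(4,5) unfolding mv_witness_def by blast
  have "g \<in> C" "h \<in> D"
    using twin_class_witness_subset[OF simplicial_twin_class_nonempty K] C D by blast+
  then have "C = D"
    using adjacent_simplicial_same_twin_class[OF sg C(1) D(1)] \<open>E g h\<close> by blast
  moreover have "g \<noteq> h"
    using sg \<open>E g h\<close> by (auto simp: simple_graph_def)
  ultimately show ?thesis
    using twin_class_witness_same_layer C(2) D(2) by metis
qed

theorem theorem5p9:
  fixes V :: "'a set" and E :: "'a \<Rightarrow> 'a \<Rightarrow> bool" and n :: nat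
  assumes "simple_graph V E"
    and "connected_graph V E"
    and "mu_t V E = card (simplicial_set V E)"
    and "n \<ge> 2"
  shows "mu_t (V \<times> K_vertices n) (cart_edges E K_edges)
           = (\<Sum>C\<in>simplicial_twin_classes V E. max (card C) n)"
proof -
  let ?K = "K_vertices n"
  have K: "finite ?K" "?K \<noteq> {}" "card ?K = n"
    using assms(4) by (auto simp: K_vertices_def)
  show ?thesis
  proof (rule mu_t_eqI)
    show "card X \<le> (\<Sum>C\<in>simplicial_twin_classes V E. max (card C) n)"
      if "total_mv_set (V \<times> ?K) (cart_edges E K_edges) X" for X
      using card_total_mv_set_cart_le[OF assms(1-3) K(1) that] K(3) by simp
    show "total_mv_set (V \<times> ?K) (cart_edges E K_edges) (mv_witness V E ?K)"
      using assms(1,2) mv_witness_subset[OF K(2)] mv_witness_adjacent_same_layer[OF assms(1) K(2)]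
      by (rule total_mv_set_cartI)
    show "card (mv_witness V E ?K) = (\<Sum>C\<in>simplicial_twin_classes V E. max (card C) n)"
      using card_mv_witness[OF assms(1) K(1,2)] K(3) by simp
  qed
qed

end
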